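(* In the standing setup, the vector $(\partial\tilde f_0/\partial x_1,\dots,\partial\tilde f_0/\partial x_n)$ does not vanish identically on any torus orbit of $X$.
   Context: Standing setup. $\mathbf F=(f_0,\dots,f_m)$ is a generic sparse system $f_i=\sum_{\alpha\in\mathcal A_i}c_{\alpha,i}X^\alpha\in\mathbb C[X_1,\dots,X_n]$ (generic: coefficients in a nonempty Zariski open subset of $\prod_i\mathbb C^{\mathcal A_i}$) with admissible support $\mathcal A$, i.e. (1) for each $i$, $\mathbb R^n_{\ge0}$ is a cone of the inner normal fan of $\operatorname{conv}(\mathcal A_i)$; (2) each $\operatorname{conv}(\mathcal A_i)$ meets every coordinate hyperplane; (3) $\mathcal A_0$ contains a "vector of unity" (a standard basis vector $e_j$). $X$ is a proper normal toric variety with fan $\Sigma$ appropriate for $\mathcal A$: $\Sigma$ refines each normal fan of $\operatorname{conv}(\mathcal A_i)$, $\mathbb R^n_{\ge0}\in\Sigma$, and for generic $f_1,\dots,f_m$ the closure of $\{f_1=\dots=f_m=0\}$ in $X$ avoids $\operatorname{Sing}X$. Cox ring $S=\mathbb C[x_\rho:\rho\in\Sigma(1)]$, $x_j:=x_{e_j}$. $a_{\rho,0}=-\min\{\langle u,\rho\rangle:u\in\mathrm{Newt}(f_0)\}$ and $\tilde f_0=\sum_\alpha c_{\alpha,0}\prod_\rho x_\rho^{\langle\alpha,\rho\rangle+a_{\rho,0}}\in S$. The torus orbit $O(\sigma)$ of a cone $\sigma\in\Sigma$ corresponds, in Cox coordinates, to points with $x_\rho=0$ exactly for $\rho\subseteq\sigma$.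 *)

theory Defs
  imports "HOL-Analysis.Analysis"
begin

definition ivec :: "int^'n \<Rightarrow> real^'n" where
  "ivec v = (\<chi> i. real_of_int (v $ i))"

definition idot :: "int^'n \<Rightarrow> int^'n \<Rightarrow> int" where
  "idot a b = (\<Sum>i\<in>UNIV. a $ i * b $ i)"

definition unitvec :: "'n \<Rightarrow> int^'n" where
  "unitvec j = (\<chi> i. if i = j then 1 else 0)"

definition orthant :: "(real^'n) set" where
  "orthant = {u. \<forall>i. 0 \<le> u $ i}"

definition rational_cone :: "(real^'n) set \<Rightarrow> bool" where
  "rational_cone \<sigma> \<longleftrightarrow> (\<exists>S::(int^'n) set. finite S \<and>
      \<sigma> = {(\<Sum>v\<in>S. t v *\<^sub>R ivec v) | t. \<forall>v. 0 \<le> t v})"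

definition strongly_convex :: "(real^'n) set \<Rightarrow> bool" where
  "strongly_convex \<sigma> \<longleftrightarrow> (\<forall>x. x \<in> \<sigma> \<and> - x \<in> \<sigma> \<longrightarrow> x = 0)"

definition is_fan :: "(real^'n) set set \<Rightarrow> bool" where
  "is_fan \<Sigma> \<longleftrightarrow> finite \<Sigma>
     \<and> (\<forall>\<sigma>\<in>\<Sigma>. rational_cone \<sigma> \<and> strongly_convex \<sigma>)
     \<and> (\<forall>\<sigma>\<in>\<Sigma>. \<forall>\<tau>. \<tau> face_of \<sigma> \<and> \<tau> \<noteq> {} \<longrightarrow> \<tau> \<in> \<Sigma>)
     \<and> (\<forall>\<sigma>\<in>\<Sigma>. \<forall>\<tau>\<in>\<Sigma>. (\<sigma> \<inter> \<tau>) face_of \<sigma> \<and> (\<sigma> \<inter> \<tau>) face_of \<tau>)"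

text \<open>The toric variety X of the fan is proper iff the fan is complete.\<close>
definition complete_fan :: "(real^'n) set set \<Rightarrow> bool" where
  "complete_fan \<Sigma> \<longleftrightarrow> \<Union>\<Sigma> = UNIV"

definition primitive :: "int^'n \<Rightarrow> bool" where
  "primitive v \<longleftrightarrow> v \<noteq> 0 \<and> (\<forall>d::int. (\<forall>i. d dvd v $ i) \<longrightarrow> \<bar>d\<bar> = 1)"

definition ray_of :: "int^'n \<Rightarrow> (real^'n) set" where
  "ray_of v = {t *\<^sub>R ivec v | t. 0 \<le> t}"

text \<open>Sigma(1), each ray identified with its primitive generator.\<close>
definition rays :: "(real^'n) set set \<Rightarrow> (int^'n) set" where
  "rays \<Sigma> = {\<rho>. primitive \<rho> \<and> ray_of \<rho> \<in> \<Sigma>}"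

definition conv_pts :: "(int^'n) set \<Rightarrow> (real^'n) set" where
  "conv_pts A = convex hull (ivec ` A)"

definition normal_cone :: "(real^'n) set \<Rightarrow> (real^'n) set \<Rightarrow> (real^'n) set" where
  "normal_cone P F = {u. \<forall>x\<in>F. \<forall>y\<in>P. x \<bullet> u \<le> y \<bullet> u}"

definition normal_fan :: "(real^'n) set \<Rightarrow> (real^'n) set set" where
  "normal_fan P = {normal_cone P F | F. F face_of P \<and> F \<noteq> {}}"

definition refines :: "(real^'n) set set \<Rightarrow> (real^'n) set set \<Rightarrow> bool" where
  "refines \<Sigma> N \<longleftrightarrow> (\<forall>\<sigma>\<in>\<Sigma>. \<exists>C\<in>N. \<sigma> \<subseteq> C)"

definition admissible :: "nat \<Rightarrow> (nat \<Rightarrow> (int^'n) set) \<Rightarrow> bool" where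
  "admissible m A \<longleftrightarrow>
     (\<forall>i\<le>m. finite (A i) \<and> (\<forall>\<alpha>\<in>A i. \<forall>k. 0 \<le> \<alpha> $ k))
     \<and> (\<forall>i\<le>m. orthant \<in> normal_fan (conv_pts (A i)))
     \<and> (\<forall>i\<le>m. \<forall>k. \<exists>p\<in>conv_pts (A i). p $ k = 0)
     \<and> (\<exists>j. unitvec j \<in> A 0)"

text \<open>Fan appropriate for A (without the condition on Sing X).\<close>
definition appropriate_fan :: "nat \<Rightarrow> (nat \<Rightarrow> (int^'n) set) \<Rightarrow> (real^'n) set set \<Rightarrow> bool" where
  "appropriate_fan m A \<Sigma> \<longleftrightarrow> is_fan \<Sigma> \<and> complete_fan \<Sigma>
     \<and> (\<forall>i\<le>m. refines \<Sigma> (normal_fan (conv_pts (A i)))) \<and> orthant \<in> \<Sigma>"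

definition poly_on :: "'v set \<Rightarrow> (('v \<Rightarrow> complex) \<Rightarrow> complex) \<Rightarrow> bool" where
  "poly_on I p \<longleftrightarrow> (\<exists>M a. finite M \<and> (\<forall>e\<in>M. \<forall>v. v \<notin> I \<longrightarrow> e v = (0::nat))
      \<and> (\<forall>y. p y = (\<Sum>e\<in>M. a e * (\<Prod>v\<in>I. y v ^ e v))))"

definition zariski_open :: "'v set \<Rightarrow> ('v \<Rightarrow> complex) set \<Rightarrow> bool" where
  "zariski_open I U \<longleftrightarrow> (\<exists>S. (\<forall>p\<in>S. poly_on I p) \<and>
      U = {y. (\<forall>v. v \<notin> I \<longrightarrow> y v = 0) \<and> (\<exists>p\<in>S. p y \<noteq> 0)})"

definition coeff_index :: "nat \<Rightarrow> (nat \<Rightarrow> (int^'n) set) \<Rightarrow> (nat \<times> (int^'n)) set" where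
  "coeff_index m A = {(i, \<alpha>). i \<le> m \<and> \<alpha> \<in> A i}"

text \<open>A property of coefficient systems c (c i alpha = coefficient of X^alpha in f_i)
  holds generically: on a nonempty Zariski open subset of prod_i C^(A_i).\<close>
definition generic :: "nat \<Rightarrow> (nat \<Rightarrow> (int^'n) set) \<Rightarrow> ((nat \<Rightarrow> int^'n \<Rightarrow> complex) \<Rightarrow> bool) \<Rightarrow> bool" where
  "generic m A P \<longleftrightarrow> (\<exists>U. zariski_open (coeff_index m A) U \<and> U \<noteq> {} \<and>
      (\<forall>c. case_prod c \<in> U \<longrightarrow> P c))"

text \<open>a_rho = - min over Newt(f) of <u,rho>; the minimum of a linear form over the
  Newton polytope is attained at a support point.\<close>
definition a_coef :: "(int^'n) set \<Rightarrow> (int^'n \<Rightarrow> complex) \<Rightarrow> int^'n \<Rightarrow> int" where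
  "a_coef A c \<rho> = - Min {idot \<alpha> \<rho> | \<alpha>. \<alpha> \<in> A \<and> c \<alpha> \<noteq> 0}"

text \<open>Points of the Cox affine space are x :: int^'n => complex (coordinates x_rho, rho in Sigma(1)).\<close>
definition hom_poly :: "(real^'n) set set \<Rightarrow> (int^'n) set \<Rightarrow> (int^'n \<Rightarrow> complex)
    \<Rightarrow> (int^'n \<Rightarrow> complex) \<Rightarrow> complex" where
  "hom_poly \<Sigma> A c x = (\<Sum>\<alpha>\<in>A. c \<alpha> *
      (\<Prod>\<rho>\<in>rays \<Sigma>. x \<rho> ^ nat (idot \<alpha> \<rho> + a_coef A c \<rho>)))"

definition dhom_poly :: "(real^'n) set set \<Rightarrow> (int^'n) set \<Rightarrow> (int^'n \<Rightarrow> complex)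
    \<Rightarrow> 'n \<Rightarrow> (int^'n \<Rightarrow> complex) \<Rightarrow> complex" where
  "dhom_poly \<Sigma> A c j x = deriv (\<lambda>t. hom_poly \<Sigma> A c (x(unitvec j := t))) (x (unitvec j))"

text \<open>Torus orbit O(sigma) in Cox coordinates: x_rho = 0 exactly for rho contained in sigma.\<close>
definition orbit_cox :: "(real^'n) set set \<Rightarrow> (real^'n) set \<Rightarrow> (int^'n \<Rightarrow> complex) set" where
  "orbit_cox \<Sigma> \<sigma> = {x. \<forall>\<rho>\<in>rays \<Sigma>. x \<rho> = 0 \<longleftrightarrow> ivec \<rho> \<in> \<sigma>}"

end

theory Submission imports Defs begin

text \<open>Once all coefficients of f_0 are nonzero, the shifts a_\<rho> depend only on the support, and at
  the point of O(\<sigma>) with x_\<rho> = 0 for \<rho> in \<sigma> and x_\<rho> = 1 otherwise the derivative of the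
  homogenization of f_0 in x_j is a linear form in these coefficients with nonnegative integer
  weights. A monomial of f_0 that is minimal on all of \<sigma> (a vertex of the face of the Newton
  polytope whose normal cone contains \<sigma>), or the vector of unity X_j when that monomial is 1,
  gives a positive weight for a suitable j. So the product of all coefficients with one such form
  per cone is a polynomial that is nonzero at the all-ones point, and its nonvanishing locus is
  the required Zariski open set.\<close>

section \<open>Polynomial functions on coefficient space\<close>

definition monom_on :: "'v set \<Rightarrow> ('v \<Rightarrow> nat) \<Rightarrow> ('v \<Rightarrow> complex) \<Rightarrow> complex" where
  "monom_on I e y = (\<Prod>v\<in>I. y v ^ e v)"

lemma poly_on_iff_monom_on:
  "poly_on I p \<longleftrightarrow> (\<exists>M a. finite M \<and> (\<forall>e\<in>M. \<forall>v. v \<notin> I \<longrightarrow> e v = 0)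
      \<and> (\<forall>y. p y = (\<Sum>e\<in>M. a e * monom_on I e y)))"
  unfolding poly_on_def monom_on_def by simp

lemma monom_on_add: "monom_on I (\<lambda>v. e1 v + e2 v) y = monom_on I e1 y * monom_on I e2 y"
  unfolding monom_on_def by (simp add: power_add prod.distrib)

lemma poly_on_const: "poly_on I (\<lambda>y. k)"
  unfolding poly_on_iff_monom_on
  by (intro exI[of _ "{\<lambda>_. 0}"] exI[of _ "\<lambda>_. k"]) (simp add: monom_on_def)

lemma poly_on_coordinate:
  assumes "finite I" "v \<in> I"
  shows "poly_on I (\<lambda>y. y v)"
proof -
  define e where "e u = (if u = v then 1 else 0 :: nat)" for u
  have "monom_on I e y = (\<Prod>u\<in>I. if u = v then y u else 1)" for y
    unfolding monom_on_def e_def by (rule prod.cong) auto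
  then have "monom_on I e y = y v" for y
    using assms by (simp add: prod.delta)
  then show ?thesis unfolding poly_on_iff_monom_on
    by (intro exI[of _ "{e}"] exI[of _ "\<lambda>_. 1"]) (auto simp: assms e_def)
qed

lemma poly_on_add:
  assumes "poly_on I p" "poly_on I q"
  shows "poly_on I (\<lambda>y. p y + q y)"
proof -
  obtain M1 a1 where 1: "finite M1" "\<forall>e\<in>M1. \<forall>v. v \<notin> I \<longrightarrow> e v = 0"
      "\<forall>y. p y = (\<Sum>e\<in>M1. a1 e * monom_on I e y)"
    using assms(1) unfolding poly_on_iff_monom_on by blast
  obtain M2 a2 where 2: "finite M2" "\<forall>e\<in>M2. \<forall>v. v \<notin> I \<longrightarrow> e v = 0"
      "\<forall>y. q y = (\<Sum>e\<in>M2. a2 e * monom_on I e y)"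
    using assms(2) unfolding poly_on_iff_monom_on by blast
  define a where "a e = (if e \<in> M1 then a1 e else 0) + (if e \<in> M2 then a2 e else 0)" for e
  have "p y + q y = (\<Sum>e\<in>M1 \<union> M2. a e * monom_on I e y)" for y
  proof -
    have "(\<Sum>e\<in>M1 \<union> M2. (if e \<in> M1 then a1 e else 0) * monom_on I e y) = p y"
      unfolding 1(3)[rule_format] by (rule sum.mono_neutral_cong_right) (use 1 2 in auto)
    moreover have "(\<Sum>e\<in>M1 \<union> M2. (if e \<in> M2 then a2 e else 0) * monom_on I e y) = q y"
      unfolding 2(3)[rule_format] by (rule sum.mono_neutral_cong_right) (use 1 2 in auto)
    ultimately show ?thesis unfolding a_def distrib_right sum.distrib by simp
  qed
  then show ?thesis unfolding poly_on_iff_monom_on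
    by (intro exI[of _ "M1 \<union> M2"] exI[of _ a]) (use 1 2 in auto)
qed

lemma poly_on_mult:
  assumes "poly_on I p" "poly_on I q"
  shows "poly_on I (\<lambda>y. p y * q y)"
proof -
  obtain M1 a1 where 1: "finite M1" "\<forall>e\<in>M1. \<forall>v. v \<notin> I \<longrightarrow> e v = 0"
      "\<forall>y. p y = (\<Sum>e\<in>M1. a1 e * monom_on I e y)"
    using assms(1) unfolding poly_on_iff_monom_on by blast
  obtain M2 a2 where 2: "finite M2" "\<forall>e\<in>M2. \<forall>v. v \<notin> I \<longrightarrow> e v = 0"
      "\<forall>y. q y = (\<Sum>e\<in>M2. a2 e * monom_on I e y)"
    using assms(2) unfolding poly_on_iff_monom_on by blast
  define g where "g = (\<lambda>(e1 :: 'a \<Rightarrow> nat, e2 :: 'a \<Rightarrow> nat) v. e1 v + e2 v)"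
  define S where "S = M1 \<times> M2"
  define a where "a e = (\<Sum>z\<in>{z \<in> S. g z = e}. a1 (fst z) * a2 (snd z))" for e
  have fS: "finite S" using 1 2 unfolding S_def by simp
  have "p y * q y = (\<Sum>e\<in>g ` S. a e * monom_on I e y)" for y
  proof -
    have "p y * q y = (\<Sum>z\<in>S. a1 (fst z) * a2 (snd z) * monom_on I (g z) y)"
      unfolding 1(3)[rule_format] 2(3)[rule_format] sum_product S_def sum.cartesian_product
      by (rule sum.cong) (auto simp: g_def monom_on_add)
    also have "\<dots> = (\<Sum>e\<in>g ` S. \<Sum>z\<in>{z \<in> S. g z = e}. a1 (fst z) * a2 (snd z) * monom_on I (g z) y)"
      by (rule sum.group[symmetric]) (use fS in auto)
    also have "\<dots> = (\<Sum>e\<in>g ` S. a e * monom_on I e y)"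
      unfolding a_def sum_distrib_right by (rule sum.cong) auto
    finally show ?thesis .
  qed
  moreover have "\<forall>e\<in>g ` S. \<forall>v. v \<notin> I \<longrightarrow> e v = 0" using 1 2 by (auto simp: g_def S_def)
  ultimately show ?thesis unfolding poly_on_iff_monom_on
    by (intro exI[of _ "g ` S"] exI[of _ a]) (use fS in auto)
qed

lemma poly_on_sum:
  "finite F \<Longrightarrow> (\<And>i. i \<in> F \<Longrightarrow> poly_on I (f i)) \<Longrightarrow> poly_on I (\<lambda>y. \<Sum>i\<in>F. f i y)"
  by (induction F rule: finite_induct) (auto intro: poly_on_add poly_on_const)

lemma poly_on_prod:
  "finite F \<Longrightarrow> (\<And>i. i \<in> F \<Longrightarrow> poly_on I (f i)) \<Longrightarrow> poly_on I (\<lambda>y. \<Prod>i\<in>F. f i y)"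
  by (induction F rule: finite_induct) (auto intro: poly_on_mult poly_on_const)

lemma finite_coeff_index:
  assumes "\<forall>i\<le>m. finite (A i)"
  shows "finite (coeff_index m A)"
proof -
  have "coeff_index m A = Sigma {..m} A" unfolding coeff_index_def by auto
  moreover have "finite (Sigma {..m} A)" by (rule finite_SigmaI) (use assms in auto)
  ultimately show ?thesis by simp
qed

lemma generic_mono: "generic m A P \<Longrightarrow> (\<And>c. P c \<Longrightarrow> Q c) \<Longrightarrow> generic m A Q"
  unfolding generic_def by blast

text \<open>The witness polynomial is the product of all coordinates and of the given forms; it does
  not vanish at the all-ones point because the forms have nonnegative integer weights.\<close>
lemma generic_nonzero_coeffs_and_forms:
  fixes w :: "'k \<Rightarrow> nat \<times> (int^'n) \<Rightarrow> nat"
  assumes fin: "\<forall>i\<le>m. finite (A i)" and "finite K"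
    and pos: "\<forall>k\<in>K. \<exists>v\<in>coeff_index m A. 0 < w k v"
  shows "generic m A (\<lambda>c. (\<forall>v\<in>coeff_index m A. case_prod c v \<noteq> 0)
     \<and> (\<forall>k\<in>K. (\<Sum>v\<in>coeff_index m A. case_prod c v * of_nat (w k v)) \<noteq> 0))"
proof -
  define I where "I = coeff_index m A"
  have "finite I" unfolding I_def using fin by (rule finite_coeff_index)
  define L where "L k y = (\<Sum>v\<in>I. y v * of_nat (w k v))" for k and y :: "nat \<times> (int^'n) \<Rightarrow> complex"
  define P where "P y = (\<Prod>v\<in>I. y v) * (\<Prod>k\<in>K. L k y)" for y
  define U where "U = {y. (\<forall>v. v \<notin> I \<longrightarrow> y v = 0) \<and> (\<exists>p\<in>{P}. p y \<noteq> 0)}"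
  have coord: "poly_on I (\<lambda>y. y v)" if "v \<in> I" for v
    using \<open>finite I\<close> that by (rule poly_on_coordinate)
  have "poly_on I (L k)" for k
    unfolding L_def using \<open>finite I\<close> by (intro poly_on_sum poly_on_mult coord poly_on_const)
  then have "poly_on I P"
    unfolding P_def using \<open>finite I\<close> \<open>finite K\<close> by (intro poly_on_mult poly_on_prod coord)
  then have "zariski_open I U" unfolding zariski_open_def U_def by (intro exI[of _ "{P}"]) auto
  define y1 where "y1 v = (if v \<in> I then 1 else 0 :: complex)" for v
  have "L k y1 \<noteq> 0" if k: "k \<in> K" for k
  proof -
    obtain v where v: "v \<in> I" "0 < w k v" using pos k unfolding I_def by blast
    have "w k v \<le> (\<Sum>u\<in>I. w k u)" by (rule member_le_sum) (use v \<open>finite I\<close> in auto)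
    moreover have "L k y1 = of_nat (\<Sum>u\<in>I. w k u)"
      unfolding L_def of_nat_sum by (rule sum.cong) (simp_all add: y1_def)
    ultimately show ?thesis using v(2) by (simp del: of_nat_sum)
  qed
  moreover have "(\<Prod>v\<in>I. y1 v) = 1" by (simp add: y1_def)
  ultimately have "P y1 \<noteq> 0" unfolding P_def using \<open>finite K\<close> by simp
  then have "y1 \<in> U" unfolding U_def by (simp add: y1_def)
  moreover have "(\<forall>v\<in>I. case_prod c v \<noteq> 0) \<and> (\<forall>k\<in>K. L k (case_prod c) \<noteq> 0)"
    if "case_prod c \<in> U" for c
    using that \<open>finite I\<close> \<open>finite K\<close> by (auto simp: U_def P_def)
  ultimately show ?thesis
    unfolding generic_def I_def[symmetric] L_def[symmetric] using \<open>zariski_open I U\<close> by blast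
qed

section \<open>Lattice vectors and rays of the fan\<close>

lemma ivec_nth [simp]: "ivec a $ i = real_of_int (a $ i)"
  unfolding ivec_def by simp

lemma ivec_inner: "ivec a \<bullet> ivec b = real_of_int (idot a b)"
  unfolding ivec_def idot_def inner_vec_def by simp

lemma unitvec_nth: "unitvec j $ i = (if i = j then 1 else 0)"
  unfolding unitvec_def by simp

lemma idot_unitvec: "idot a (unitvec k) = a $ k"
  unfolding idot_def unitvec_def by (simp add: if_distrib cong: if_cong)

lemma convex_orthant: "convex orthant"
  unfolding convex_def orthant_def by (auto intro!: add_nonneg_nonneg mult_nonneg_nonneg)

lemma conv_pts_subset_orthant:
  assumes "\<forall>\<alpha>\<in>A. \<forall>k. 0 \<le> \<alpha> $ k"
  shows "conv_pts A \<subseteq> orthant"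
  unfolding conv_pts_def
  by (rule hull_minimal) (use assms convex_orthant in \<open>auto simp: orthant_def\<close>)

lemma ray_of_unitvec_face_of_orthant: "ray_of (unitvec k) face_of orthant"
  unfolding face_of_def
proof (intro conjI ballI impI)
  show "ray_of (unitvec k) \<subseteq> orthant"
    by (auto simp: ray_of_def orthant_def unitvec_nth)
  have "ray_of (unitvec k) = (\<lambda>t. t *\<^sub>R ivec (unitvec k)) ` {0..}"
    by (auto simp: ray_of_def)
  then show "convex (ray_of (unitvec k))"
    by (simp add: convex_linear_image linear_scaleR_left)
next
  fix a b x assume a: "a \<in> orthant" and b: "b \<in> orthant" and x: "x \<in> ray_of (unitvec k)"
    and seg: "x \<in> open_segment a b"
  obtain u where u: "0 < u" "u < 1" "x = (1 - u) *\<^sub>R a + u *\<^sub>R b"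
    using seg by (auto simp: in_segment)
  obtain t where t: "x = t *\<^sub>R ivec (unitvec k)" using x by (auto simp: ray_of_def)
  have "a $ i = 0 \<and> b $ i = 0" if "i \<noteq> k" for i
  proof -
    have "x $ i = 0" using t that by (simp add: unitvec_nth)
    then have "(1 - u) * a $ i + u * b $ i = 0" using u by simp
    moreover have "0 \<le> a $ i" "0 \<le> b $ i" using a b by (auto simp: orthant_def)
    ultimately show ?thesis using u by (smt (verit) mult_pos_pos mult_nonneg_nonneg)
  qed
  then have "a = (a $ k) *\<^sub>R ivec (unitvec k)" "b = (b $ k) *\<^sub>R ivec (unitvec k)"
    by (auto simp: vec_eq_iff unitvec_nth)
  moreover have "0 \<le> a $ k" "0 \<le> b $ k" using a b unfolding orthant_def by auto
  ultimately show "a \<in> ray_of (unitvec k)" "b \<in> ray_of (unitvec k)"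
    unfolding ray_of_def by blast+
qed

lemma primitive_unitvec: "primitive (unitvec k)"
  unfolding primitive_def
proof (intro conjI allI impI)
  show "unitvec k \<noteq> 0" by (auto simp: vec_eq_iff unitvec_nth)
  fix d :: int assume "\<forall>i. d dvd unitvec k $ i"
  then have "d dvd 1" by (metis unitvec_nth)
  then show "\<bar>d\<bar> = 1" by simp
qed

lemma unitvec_in_rays:
  assumes "is_fan \<Sigma>" "orthant \<in> \<Sigma>"
  shows "unitvec k \<in> rays \<Sigma>"
proof -
  have "ray_of (unitvec k) \<noteq> {}" unfolding ray_of_def by auto
  then have "ray_of (unitvec k) \<in> \<Sigma>"
    using assms ray_of_unitvec_face_of_orthant unfolding is_fan_def by blast
  then show ?thesis unfolding rays_def using primitive_unitvec by auto
qed

text \<open>A vector with two positive coordinates is the midpoint of two points of the orthant that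
  are not on its ray.\<close>
lemma single_support_if_ray_face_of_orthant:
  fixes \<rho> :: "int^'n"
  assumes face: "ray_of \<rho> face_of orthant" and nn: "\<forall>i. 0 \<le> \<rho> $ i"
    and k: "\<rho> $ k \<noteq> 0" and "i \<noteq> k"
  shows "\<rho> $ i = 0"
proof (rule ccontr)
  assume ne: "\<rho> $ i \<noteq> 0"
  define a :: "real^'n" where "a = (2 * real_of_int (\<rho> $ k)) *\<^sub>R ivec (unitvec k)"
  define b :: "real^'n" where "b = 2 *\<^sub>R ivec \<rho> - a"
  have ak: "a $ k = 2 * \<rho> $ k" "a $ i = 0" and bk: "b $ k = 0"
    using \<open>i \<noteq> k\<close> by (auto simp: a_def b_def unitvec_nth)
  have "a \<in> orthant" "b \<in> orthant" using nn by (auto simp: a_def b_def orthant_def unitvec_nth)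
  moreover have "ivec \<rho> \<in> open_segment a b"
  proof -
    have "a \<noteq> b" using ak bk k by (metis mult_eq_0_iff of_int_eq_0_iff zero_neq_numeral)
    moreover have "ivec \<rho> = midpoint a b" unfolding midpoint_def b_def by (simp add: algebra_simps)
    ultimately show ?thesis by (simp add: midpoint_in_open_segment)
  qed
  moreover have "ivec \<rho> \<in> ray_of \<rho>" unfolding ray_of_def by (auto intro!: exI[of _ 1])
  ultimately have "a \<in> ray_of \<rho>" using face unfolding face_of_def by blast
  then obtain t where t: "a = t *\<^sub>R ivec \<rho>" by (auto simp: ray_of_def)
  then have "t = 0" using ak(2) ne by simp
  then show False using t ak(1) k by simp
qed

lemma primitive_single_support_eq_unitvec:
  assumes "primitive \<rho>" and "0 < \<rho> $ k" and "\<forall>i. i \<noteq> k \<longrightarrow> \<rho> $ i = 0"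
  shows "\<rho> = unitvec k"
proof -
  have "\<forall>i. \<rho> $ k dvd \<rho> $ i" using assms(3) by (metis dvd_0_right dvd_refl)
  then have "\<bar>\<rho> $ k\<bar> = 1" using assms(1) unfolding primitive_def by blast
  then have "\<rho> $ k = 1" using assms(2) by simp
  then show ?thesis using assms(3) by (auto simp: vec_eq_iff unitvec_nth)
qed

lemma ray_in_orthant_eq_unitvec:
  assumes fan: "is_fan \<Sigma>" "orthant \<in> \<Sigma>" and r: "\<rho> \<in> rays \<Sigma>" and o: "ivec \<rho> \<in> orthant"
  shows "\<exists>k. \<rho> = unitvec k"
proof -
  have prim: "primitive \<rho>" and R: "ray_of \<rho> \<in> \<Sigma>" using r by (auto simp: rays_def)
  have "ray_of \<rho> \<subseteq> orthant"
    using o unfolding ray_of_def orthant_def by (auto intro!: mult_nonneg_nonneg)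
  then have "ray_of \<rho> \<inter> orthant = ray_of \<rho>" by blast
  then have face: "ray_of \<rho> face_of orthant"
    using fan R unfolding is_fan_def by metis
  have nn: "\<forall>i. 0 \<le> \<rho> $ i" using o by (auto simp: orthant_def)
  obtain k where k: "\<rho> $ k \<noteq> 0"
    using prim unfolding primitive_def by (auto simp: vec_eq_iff)
  have "\<rho> = unitvec k"
  proof (rule primitive_single_support_eq_unitvec[OF prim])
    show "0 < \<rho> $ k" using nn k by (simp add: order_le_neq_trans)
    show "\<forall>i. i \<noteq> k \<longrightarrow> \<rho> $ i = 0"
      using single_support_if_ray_face_of_orthant[OF face nn k] by blast
  qed
  then show ?thesis ..
qed

text \<open>Write the i-th coordinates as p g and q g with p, q coprime: proportionality forces q to
  divide every coordinate of \<rho>' and p every coordinate of \<rho>, so p = q = \<plusminus>1.\<close>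
lemma primitive_eq_if_proportional:
  assumes p: "primitive \<rho>" "primitive \<rho>'"
    and comp: "\<And>k. real_of_int (\<rho> $ k) = t * real_of_int (\<rho>' $ k)" and "0 \<le> t"
  shows "\<rho> = \<rho>'"
proof -
  obtain i where i: "\<rho>' $ i \<noteq> 0" using p(2) unfolding primitive_def by (auto simp: vec_eq_iff)
  obtain j where j: "\<rho> $ j \<noteq> 0" using p(1) unfolding primitive_def by (auto simp: vec_eq_iff)
  have tpos: "0 < t" using comp[of j] j \<open>0 \<le> t\<close> by (cases "t = 0") auto
  define a where "a = \<rho> $ i"
  define b where "b = \<rho>' $ i"
  define g where "g = gcd a b"
  have g0: "g \<noteq> 0" using i unfolding g_def b_def by simp
  obtain p q where pq: "a = p * g" "b = q * g" "coprime p q"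
    using gcd_coprime_exists[OF g0[unfolded g_def]] unfolding g_def by blast
  have cross: "\<rho> $ k * q = p * \<rho>' $ k" for k
  proof -
    have "real_of_int (\<rho> $ k * b) = real_of_int (a * \<rho>' $ k)"
      using comp[of k] comp[of i] unfolding a_def b_def by simp
    then have "(\<rho> $ k * q) * g = (p * \<rho>' $ k) * g"
      unfolding of_int_eq_iff pq(1,2) by (simp add: ac_simps)
    then show ?thesis using g0 by simp
  qed
  have "q dvd \<rho>' $ k" for k
    using cross[of k] pq(3) by (metis coprime_commute coprime_dvd_mult_right_iff dvd_triv_right)
  then have q1: "\<bar>q\<bar> = 1" using p(2) unfolding primitive_def by blast
  have "p dvd \<rho> $ k" for k
    using cross[of k] pq(3) by (metis coprime_dvd_mult_left_iff dvd_triv_left)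
  then have p1: "\<bar>p\<bar> = 1" using p(1) unfolding primitive_def by blast
  have "real_of_int p * g = t * real_of_int q * g"
    using comp[of i] unfolding a_def[symmetric] b_def[symmetric] pq(1,2) by simp
  then have "real_of_int p = t * real_of_int q" using g0 by simp
  then have "p = q" using tpos p1 q1 by (auto simp: abs_if split: if_splits)
  then show ?thesis using cross p1 by (fastforce simp: vec_eq_iff)
qed

lemma ray_of_inj:
  assumes "primitive \<rho>" "primitive \<rho>'" and "ray_of \<rho> = ray_of \<rho>'"
  shows "\<rho> = \<rho>'"
proof -
  have "ivec \<rho> \<in> ray_of \<rho>" unfolding ray_of_def by (auto intro!: exI[of _ 1])
  then obtain t where "ivec \<rho> = t *\<^sub>R ivec \<rho>'" "0 \<le> t" using assms(3) by (auto simp: ray_of_def)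
  then show ?thesis
    by (intro primitive_eq_if_proportional[OF assms(1,2)]) (auto simp: vec_eq_iff)
qed

lemma finite_rays:
  assumes "finite \<Sigma>"
  shows "finite (rays \<Sigma>)"
proof (rule finite_imageD)
  show "finite (ray_of ` rays \<Sigma>)"
    by (rule finite_subset[OF _ assms]) (auto simp: rays_def)
  show "inj_on ray_of (rays \<Sigma>)"
    by (rule inj_onI) (auto simp: rays_def intro: ray_of_inj)
qed

section \<open>Exponents of the homogenization\<close>

definition a_supp :: "(int^'n) set \<Rightarrow> int^'n \<Rightarrow> int" where
  "a_supp A \<rho> = - Min ((\<lambda>\<alpha>. idot \<alpha> \<rho>) ` A)"

text \<open>Exponent of x_\<rho> in the homogenization of the monomial X^\<alpha>.\<close>
definition hom_exp :: "(int^'n) set \<Rightarrow> int^'n \<Rightarrow> int^'n \<Rightarrow> nat" where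
  "hom_exp A \<alpha> \<rho> = nat (idot \<alpha> \<rho> + a_supp A \<rho>)"

lemma a_coef_eq_a_supp:
  assumes "\<forall>\<alpha>\<in>A. c \<alpha> \<noteq> 0"
  shows "a_coef A c \<rho> = a_supp A \<rho>"
proof -
  have "{idot \<alpha> \<rho> | \<alpha>. \<alpha> \<in> A \<and> c \<alpha> \<noteq> 0} = (\<lambda>\<alpha>. idot \<alpha> \<rho>) ` A" using assms by auto
  then show ?thesis unfolding a_coef_def a_supp_def by simp
qed

lemma a_supp_nonneg: "finite A \<Longrightarrow> \<beta> \<in> A \<Longrightarrow> 0 \<le> idot \<beta> \<rho> + a_supp A \<rho>"
  unfolding a_supp_def by (simp add: Min_le)

lemma a_supp_eq_zero_iff:
  assumes "finite A" "\<alpha> \<in> A"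
  shows "idot \<alpha> \<rho> + a_supp A \<rho> = 0 \<longleftrightarrow> (\<forall>\<beta>\<in>A. idot \<alpha> \<rho> \<le> idot \<beta> \<rho>)"
proof
  assume "idot \<alpha> \<rho> + a_supp A \<rho> = 0"
  then show "\<forall>\<beta>\<in>A. idot \<alpha> \<rho> \<le> idot \<beta> \<rho>" using a_supp_nonneg[OF assms(1), of _ \<rho>] by force
next
  assume "\<forall>\<beta>\<in>A. idot \<alpha> \<rho> \<le> idot \<beta> \<rho>"
  then have "Min ((\<lambda>\<alpha>. idot \<alpha> \<rho>) ` A) = idot \<alpha> \<rho>" using assms by (intro Min_eqI) auto
  then show "idot \<alpha> \<rho> + a_supp A \<rho> = 0" unfolding a_supp_def by simp
qed

lemma inner_ivec_unitvec: "ivec (unitvec k) \<bullet> x = x $ k"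
proof -
  have "ivec (unitvec k) \<bullet> x = (\<Sum>i\<in>UNIV. if i = k then x $ i else 0)"
    unfolding inner_vec_def by (rule sum.cong) (auto simp: unitvec_nth)
  then show ?thesis by simp
qed

lemma exists_support_coord_zero:
  assumes "\<forall>\<alpha>\<in>A. \<forall>k. 0 \<le> \<alpha> $ k" and "p \<in> conv_pts A" "p $ k = 0"
  shows "\<exists>\<alpha>\<in>A. \<alpha> $ k = 0"
proof (rule ccontr)
  assume "\<not> ?thesis"
  then have "1 \<le> \<alpha> $ k" if "\<alpha> \<in> A" for \<alpha>
    using assms(1) that by (metis int_one_le_iff_zero_less order_le_less)
  then have "ivec ` A \<subseteq> {x. 1 \<le> ivec (unitvec k) \<bullet> x}" by (auto simp: inner_ivec_unitvec)
  then have "conv_pts A \<subseteq> {x. 1 \<le> ivec (unitvec k) \<bullet> x}"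
    unfolding conv_pts_def using convex_halfspace_ge by (rule hull_minimal)
  then show False using assms(2,3) by (auto simp: inner_ivec_unitvec)
qed

lemma a_supp_unitvec:
  assumes "finite A" "\<forall>\<alpha>\<in>A. \<forall>k. 0 \<le> \<alpha> $ k" "\<exists>\<alpha>\<in>A. \<alpha> $ k = 0"
  shows "a_supp A (unitvec k) = 0"
proof -
  obtain \<alpha> where "\<alpha> \<in> A" "\<alpha> $ k = 0" using assms(3) by blast
  then have "idot \<alpha> (unitvec k) + a_supp A (unitvec k) = 0"
    using assms by (subst a_supp_eq_zero_iff) (auto simp: idot_unitvec)
  then show ?thesis using \<open>\<alpha> $ k = 0\<close> by (simp add: idot_unitvec)
qed

text \<open>The face of the Newton polytope with normal cone the orthant is {0}; any \<rho> that is
  nonnegative on the polytope is in its normal cone.\<close>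
lemma nonneg_on_support_imp_orthant:
  fixes \<rho> :: "int^'n"
  assumes nn: "\<forall>\<alpha>\<in>A. \<forall>k. 0 \<le> \<alpha> $ k" and "0 \<in> A"
    and nf: "orthant \<in> normal_fan (conv_pts A)"
    and pos: "\<forall>\<beta>\<in>A. 0 \<le> idot \<beta> \<rho>"
  shows "ivec \<rho> \<in> orthant"
proof -
  obtain F where F: "orthant = normal_cone (conv_pts A) F" "F face_of conv_pts A" "F \<noteq> {}"
    using nf unfolding normal_fan_def by blast
  have "ivec 0 = (0 :: real^'n)" by (simp add: vec_eq_iff)
  then have P0: "0 \<in> conv_pts A"
    using \<open>0 \<in> A\<close> unfolding conv_pts_def by (metis hull_inc image_eqI)
  have F0: "x = 0" if "x \<in> F" for x
  proof -
    have "x \<in> orthant"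
      using that F(2) face_of_imp_subset conv_pts_subset_orthant[OF nn] by blast
    then have xn: "\<forall>i\<in>UNIV. 0 \<le> x $ i" unfolding orthant_def by blast
    define one :: "real^'n" where "one = (\<chi> i. 1)"
    have "one \<in> orthant" unfolding orthant_def one_def by simp
    then have "x \<bullet> one \<le> 0 \<bullet> one"
      using F(1) that P0 unfolding normal_cone_def by blast
    then have "(\<Sum>i\<in>UNIV. x $ i) \<le> 0" unfolding inner_vec_def one_def by simp
    then have "(\<Sum>i\<in>UNIV. x $ i) = 0" using xn by (meson antisym sum_nonneg)
    then have "\<forall>i\<in>UNIV. x $ i = 0" using xn by (subst (asm) sum_nonneg_eq_0_iff) auto
    then show ?thesis by (simp add: vec_eq_iff)
  qed
  have "ivec ` A \<subseteq> {y. 0 \<le> ivec \<rho> \<bullet> y}" using pos by (auto simp: inner_commute[of "ivec \<rho>"] ivec_inner)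
  then have "conv_pts A \<subseteq> {y. 0 \<le> ivec \<rho> \<bullet> y}"
    unfolding conv_pts_def using convex_halfspace_ge by (rule hull_minimal)
  then have "ivec \<rho> \<in> normal_cone (conv_pts A) F"
    unfolding normal_cone_def using F0 by (fastforce simp: inner_commute[of _ "ivec \<rho>"])
  then show ?thesis using F(1) by simp
qed

text \<open>A vertex of the face whose normal cone contains \<sigma> minimizes every \<rho> in \<sigma>.\<close>
lemma exists_support_min_on_cone:
  assumes fin: "finite A"
    and ref: "refines \<Sigma> (normal_fan (conv_pts A))" and \<sigma>: "\<sigma> \<in> \<Sigma>"
  shows "\<exists>\<alpha>\<in>A. \<forall>\<rho>. ivec \<rho> \<in> \<sigma> \<longrightarrow> idot \<alpha> \<rho> + a_supp A \<rho> = 0"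
proof -
  obtain F where F: "\<sigma> \<subseteq> normal_cone (conv_pts A) F" "F face_of conv_pts A" "F \<noteq> {}"
    using ref \<sigma> unfolding refines_def normal_fan_def by blast
  have "compact (ivec ` A)" using fin by (intro finite_imp_compact) simp
  then obtain S where S: "S \<subseteq> ivec ` A" "F = convex hull S"
    using face_of_convex_hull_subset F(2) unfolding conv_pts_def by blast
  moreover have "S \<noteq> {}" using S(2) F(3) by auto
  ultimately obtain \<alpha> where \<alpha>: "\<alpha> \<in> A" "ivec \<alpha> \<in> S" by blast
  then have "ivec \<alpha> \<in> F" unfolding S(2) by (simp add: hull_inc)
  have "idot \<alpha> \<rho> \<le> idot \<beta> \<rho>" if "ivec \<rho> \<in> \<sigma>" "\<beta> \<in> A" for \<rho> \<beta>
  proof -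
    have "ivec \<beta> \<in> conv_pts A" unfolding conv_pts_def using that(2) by (intro hull_inc) auto
    then have "ivec \<alpha> \<bullet> ivec \<rho> \<le> ivec \<beta> \<bullet> ivec \<rho>"
      using \<open>ivec \<alpha> \<in> F\<close> that(1) F(1) unfolding normal_cone_def by blast
    then show ?thesis by (simp add: ivec_inner)
  qed
  then show ?thesis using \<alpha>(1) fin by (auto simp: a_supp_eq_zero_iff)
qed

lemma hom_exp_unitvec:
  "a_supp A (unitvec k) = 0 \<Longrightarrow> hom_exp A \<alpha> (unitvec k) = nat (\<alpha> $ k)"
  unfolding hom_exp_def by (simp add: idot_unitvec)

section \<open>Derivatives at points of torus orbits\<close>

definition orbit_point :: "(real^'n) set \<Rightarrow> int^'n \<Rightarrow> complex" where
  "orbit_point \<sigma> \<rho> = (if ivec \<rho> \<in> \<sigma> then 0 else 1)"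

lemma orbit_point_in_orbit_cox: "orbit_point \<sigma> \<in> orbit_cox \<Sigma> \<sigma>"
  unfolding orbit_cox_def orbit_point_def by simp

text \<open>The value at orbit_point \<sigma> of the x_j-derivative of the monomial with exponents e.\<close>
definition orbit_weight :: "(int^'n) set \<Rightarrow> (real^'n) set \<Rightarrow> 'n \<Rightarrow> (int^'n \<Rightarrow> nat) \<Rightarrow> nat" where
  "orbit_weight R \<sigma> j e =
     (if (\<forall>\<rho>\<in>R - {unitvec j}. ivec \<rho> \<in> \<sigma> \<longrightarrow> e \<rho> = 0) \<and> (ivec (unitvec j) \<in> \<sigma> \<longrightarrow> e (unitvec j) = 1)
      then e (unitvec j) else 0)"

text \<open>A monomial of f_0 minimal on all of \<sigma> either involves some X_k, and then no variable
  of its homogenization vanishes at orbit_point \<sigma> while its x_(e_k)-exponent is positive; or it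
  is the constant 1, and then all rays of \<sigma> lie in the orthant, so they are standard basis
  vectors, and the monomial X_j of f_0 has x_j-derivative 1 there.\<close>
lemma exists_positive_orbit_weight:
  assumes fin: "finite A" and nn: "\<forall>\<alpha>\<in>A. \<forall>k. 0 \<le> \<alpha> $ k"
    and nf: "orthant \<in> normal_fan (conv_pts A)" and zc: "\<forall>k. \<exists>\<alpha>\<in>A. \<alpha> $ k = 0"
    and j0: "unitvec j0 \<in> A"
    and fan: "is_fan \<Sigma>" "orthant \<in> \<Sigma>" and ref: "refines \<Sigma> (normal_fan (conv_pts A))"
    and \<sigma>: "\<sigma> \<in> \<Sigma>"
  shows "\<exists>j. \<exists>\<alpha>\<in>A. 0 < orbit_weight (rays \<Sigma>) \<sigma> j (hom_exp A \<alpha>)"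
proof -
  have au: "a_supp A (unitvec k) = 0" for k using a_supp_unitvec[OF fin nn] zc by blast
  obtain \<alpha> where \<alpha>: "\<alpha> \<in> A" and min: "\<forall>\<rho>. ivec \<rho> \<in> \<sigma> \<longrightarrow> idot \<alpha> \<rho> + a_supp A \<rho> = 0"
    using exists_support_min_on_cone[OF fin ref \<sigma>] by blast
  then have \<alpha>0: "\<forall>\<rho>. ivec \<rho> \<in> \<sigma> \<longrightarrow> hom_exp A \<alpha> \<rho> = 0" by (simp add: hom_exp_def)
  consider (nonconst) k where "\<alpha> $ k \<noteq> 0" | (const) "\<alpha> = 0" by (auto simp: vec_eq_iff)
  then show ?thesis
  proof cases
    case nonconst
    then have "0 < \<alpha> $ k" using nn \<alpha> by (metis order_le_neq_trans)
    then have "0 < hom_exp A \<alpha> (unitvec k)" by (simp add: hom_exp_unitvec[OF au])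
    then have "ivec (unitvec k) \<notin> \<sigma>" using \<alpha>0 by auto
    then have "0 < orbit_weight (rays \<Sigma>) \<sigma> k (hom_exp A \<alpha>)"
      using \<alpha>0 \<open>0 < hom_exp A \<alpha> (unitvec k)\<close> by (simp add: orbit_weight_def)
    then show ?thesis using \<alpha> by blast
  next
    case const
    have "hom_exp A (unitvec j0) \<rho> = 0" if \<rho>: "\<rho> \<in> rays \<Sigma> - {unitvec j0}" "ivec \<rho> \<in> \<sigma>" for \<rho>
    proof -
      have "0 \<in> A" "a_supp A \<rho> = 0" using \<alpha> min \<rho>(2) const by (auto simp: idot_def)
      then have "\<forall>\<beta>\<in>A. 0 \<le> idot \<beta> \<rho>" using a_supp_nonneg[OF fin, of _ \<rho>] by simp
      then have "ivec \<rho> \<in> orthant" using nonneg_on_support_imp_orthant[OF nn \<open>0 \<in> A\<close> nf] by blast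
      then obtain k where "\<rho> = unitvec k" using ray_in_orthant_eq_unitvec[OF fan] \<rho>(1) by blast
      then show ?thesis using \<rho>(1) by (auto simp: hom_exp_unitvec[OF au] unitvec_nth)
    qed
    moreover have "hom_exp A (unitvec j0) (unitvec j0) = 1" by (simp add: hom_exp_unitvec[OF au] unitvec_nth)
    ultimately have "0 < orbit_weight (rays \<Sigma>) \<sigma> j0 (hom_exp A (unitvec j0))"
      by (simp add: orbit_weight_def)
    then show ?thesis using j0 by blast
  qed
qed

lemma hom_poly_fun_upd:
  assumes "finite (rays \<Sigma>)" "unitvec j \<in> rays \<Sigma>" "\<forall>\<alpha>\<in>A. c \<alpha> \<noteq> 0"
  shows "hom_poly \<Sigma> A c (x(unitvec j := t)) =
    (\<Sum>\<alpha>\<in>A. c \<alpha> * (\<Prod>\<rho>\<in>rays \<Sigma> - {unitvec j}. x \<rho> ^ hom_exp A \<alpha> \<rho>) * t ^ hom_exp A \<alpha> (unitvec j))"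
  unfolding hom_poly_def a_coef_eq_a_supp[OF assms(3)]
proof (rule sum.cong[OF refl])
  fix \<alpha>
  have "(\<Prod>\<rho>\<in>rays \<Sigma>. (x(unitvec j := t)) \<rho> ^ hom_exp A \<alpha> \<rho>)
      = t ^ hom_exp A \<alpha> (unitvec j) * (\<Prod>\<rho>\<in>rays \<Sigma> - {unitvec j}. x \<rho> ^ hom_exp A \<alpha> \<rho>)"
    by (subst prod.remove[OF assms(1,2)]) (auto intro!: prod.cong)
  then show "c \<alpha> * (\<Prod>\<rho>\<in>rays \<Sigma>. (x(unitvec j := t)) \<rho> ^ nat (idot \<alpha> \<rho> + a_supp A \<rho>)) =
      c \<alpha> * (\<Prod>\<rho>\<in>rays \<Sigma> - {unitvec j}. x \<rho> ^ hom_exp A \<alpha> \<rho>) * t ^ hom_exp A \<alpha> (unitvec j)"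
    unfolding hom_exp_def by (simp add: ac_simps)
qed

lemma dhom_poly_eq:
  assumes "finite (rays \<Sigma>)" "unitvec j \<in> rays \<Sigma>" "\<forall>\<alpha>\<in>A. c \<alpha> \<noteq> 0"
  shows "dhom_poly \<Sigma> A c j x = (\<Sum>\<alpha>\<in>A. c \<alpha> * ((\<Prod>\<rho>\<in>rays \<Sigma> - {unitvec j}. x \<rho> ^ hom_exp A \<alpha> \<rho>)
      * (of_nat (hom_exp A \<alpha> (unitvec j)) * x (unitvec j) ^ (hom_exp A \<alpha> (unitvec j) - 1))))"
proof -
  have "((\<lambda>t. \<Sum>\<alpha>\<in>A. c \<alpha> * (\<Prod>\<rho>\<in>rays \<Sigma> - {unitvec j}. x \<rho> ^ hom_exp A \<alpha> \<rho>) * t ^ hom_exp A \<alpha> (unitvec j))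
     has_field_derivative (\<Sum>\<alpha>\<in>A. c \<alpha> * ((\<Prod>\<rho>\<in>rays \<Sigma> - {unitvec j}. x \<rho> ^ hom_exp A \<alpha> \<rho>)
      * (of_nat (hom_exp A \<alpha> (unitvec j)) * x (unitvec j) ^ (hom_exp A \<alpha> (unitvec j) - 1)))))
     (at (x (unitvec j)))"
    by (auto intro!: derivative_eq_intros simp: ac_simps)
  then show ?thesis unfolding dhom_poly_def hom_poly_fun_upd[OF assms] by (rule DERIV_imp_deriv)
qed

lemma prod_power_zero_one:
  assumes "finite R" "\<forall>\<rho>\<in>R. f \<rho> = 0 \<or> f \<rho> = 1"
  shows "(\<Prod>\<rho>\<in>R. f \<rho> ^ N \<rho>) = (if \<forall>\<rho>\<in>R. f \<rho> = 0 \<longrightarrow> N \<rho> = 0 then 1 else (0 :: 'a :: comm_semiring_1))"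
proof (cases "\<forall>\<rho>\<in>R. f \<rho> = 0 \<longrightarrow> N \<rho> = 0")
  case True
  then show ?thesis using assms(2) by (auto intro!: prod.neutral)
next
  case False
  then obtain \<rho> where "\<rho> \<in> R" "f \<rho> ^ N \<rho> = 0" by (auto simp: zero_power)
  then show ?thesis using False assms(1) by (auto intro: prod_zero)
qed

lemma deriv_monomial_at_orbit_point:
  assumes "finite R"
  shows "(\<Prod>\<rho>\<in>R - {unitvec j}. orbit_point \<sigma> \<rho> ^ e \<rho>)
      * (of_nat (e (unitvec j)) * orbit_point \<sigma> (unitvec j) ^ (e (unitvec j) - 1))
    = of_nat (orbit_weight R \<sigma> j e)"
proof -
  have "(\<Prod>\<rho>\<in>R - {unitvec j}. orbit_point \<sigma> \<rho> ^ e \<rho>) =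
      (if \<forall>\<rho>\<in>R - {unitvec j}. ivec \<rho> \<in> \<sigma> \<longrightarrow> e \<rho> = 0 then 1 else 0)"
    using assms by (subst prod_power_zero_one) (auto simp: orbit_point_def)
  moreover have "of_nat (e (unitvec j)) * orbit_point \<sigma> (unitvec j) ^ (e (unitvec j) - 1) =
      (if ivec (unitvec j) \<in> \<sigma> \<longrightarrow> e (unitvec j) = 1 then of_nat (e (unitvec j)) else (0 :: complex))"
    by (cases "e (unitvec j)") (auto simp: orbit_point_def)
  ultimately show ?thesis by (auto simp: orbit_weight_def)
qed

lemma dhom_poly_at_orbit_point:
  assumes "finite (rays \<Sigma>)" "unitvec j \<in> rays \<Sigma>" "\<forall>\<alpha>\<in>A. c \<alpha> \<noteq> 0"
  shows "dhom_poly \<Sigma> A c j (orbit_point \<sigma>) = (\<Sum>\<alpha>\<in>A. c \<alpha> * of_nat (orbit_weight (rays \<Sigma>) \<sigma> j (hom_exp A \<alpha>)))"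
  unfolding dhom_poly_eq[OF assms] deriv_monomial_at_orbit_point[OF assms(1)] ..

lemma admissible_support_zero:
  assumes "admissible m A"
  shows "finite (A 0)" "\<forall>\<alpha>\<in>A 0. \<forall>k. 0 \<le> \<alpha> $ k" "orthant \<in> normal_fan (conv_pts (A 0))"
    "\<forall>k. \<exists>\<alpha>\<in>A 0. \<alpha> $ k = 0" "\<exists>j. unitvec j \<in> A 0"
proof -
  have adm: "\<forall>i\<le>m. finite (A i) \<and> (\<forall>\<alpha>\<in>A i. \<forall>k. 0 \<le> \<alpha> $ k)"
    "\<forall>i\<le>m. orthant \<in> normal_fan (conv_pts (A i))" "\<forall>i\<le>m. \<forall>k. \<exists>p\<in>conv_pts (A i). p $ k = 0"
    "\<exists>j. unitvec j \<in> A 0"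
    using assms unfolding admissible_def by blast+
  show "finite (A 0)" "\<forall>\<alpha>\<in>A 0. \<forall>k. 0 \<le> \<alpha> $ k"
    using adm(1)[rule_format, OF le0] by blast+
  show "orthant \<in> normal_fan (conv_pts (A 0))" using adm(2)[rule_format, OF le0] .
  show "\<exists>j. unitvec j \<in> A 0" by (rule adm(4))
  show "\<forall>k. \<exists>\<alpha>\<in>A 0. \<alpha> $ k = 0"
    using adm(1,3)[rule_format, OF le0] exists_support_coord_zero[of "A 0"] by blast
qed

lemma sum_coeff_index_fst_zero:
  assumes "finite (coeff_index m A)" and "\<forall>v\<in>coeff_index m A. fst v \<noteq> 0 \<longrightarrow> f v = 0"
  shows "(\<Sum>v\<in>coeff_index m A. f v) = (\<Sum>\<alpha>\<in>A 0. f (0, \<alpha>))"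
proof -
  have "(\<Sum>v\<in>coeff_index m A. f v) = (\<Sum>v\<in>Pair 0 ` A 0. f v)"
    using assms by (intro sum.mono_neutral_right) (auto simp: coeff_index_def)
  also have "\<dots> = (\<Sum>\<alpha>\<in>A 0. f (0, \<alpha>))" by (subst sum.reindex) (auto simp: inj_on_def)
  finally show ?thesis .
qed

lemma generic_orbit_derivative_nonzero:
  fixes A :: "nat \<Rightarrow> (int^'n) set"
  assumes finA: "\<forall>i\<le>m. finite (A i)" and fin: "finite \<Sigma>" "finite (rays \<Sigma>)"
    and J: "\<forall>\<sigma>\<in>\<Sigma>. unitvec (J \<sigma>) \<in> rays \<Sigma>
      \<and> (\<exists>\<alpha>\<in>A 0. 0 < orbit_weight (rays \<Sigma>) \<sigma> (J \<sigma>) (hom_exp (A 0) \<alpha>))"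
  shows "generic m A (\<lambda>c. \<forall>\<sigma>\<in>\<Sigma>. dhom_poly \<Sigma> (A 0) (c 0) (J \<sigma>) (orbit_point \<sigma>) \<noteq> 0)"
proof -
  define w where "w \<sigma> v = (if fst v = 0 then orbit_weight (rays \<Sigma>) \<sigma> (J \<sigma>) (hom_exp (A 0) (snd v)) else 0)"
    for \<sigma> and v :: "nat \<times> (int^'n)"
  have "\<forall>\<sigma>\<in>\<Sigma>. \<exists>v\<in>coeff_index m A. 0 < w \<sigma> v"
    using J by (fastforce simp: w_def coeff_index_def)
  then have "generic m A (\<lambda>c. (\<forall>v\<in>coeff_index m A. case_prod c v \<noteq> 0)
     \<and> (\<forall>\<sigma>\<in>\<Sigma>. (\<Sum>v\<in>coeff_index m A. case_prod c v * of_nat (w \<sigma> v)) \<noteq> 0))"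
    by (rule generic_nonzero_coeffs_and_forms[OF finA fin(1)])
  then show ?thesis
  proof (rule generic_mono, intro ballI)
    fix c :: "nat \<Rightarrow> int^'n \<Rightarrow> complex" and \<sigma>
    assume c: "(\<forall>v\<in>coeff_index m A. case_prod c v \<noteq> 0)
      \<and> (\<forall>\<sigma>\<in>\<Sigma>. (\<Sum>v\<in>coeff_index m A. case_prod c v * of_nat (w \<sigma> v)) \<noteq> 0)" and "\<sigma> \<in> \<Sigma>"
    have "\<forall>\<alpha>\<in>A 0. c 0 \<alpha> \<noteq> 0" using c by (auto simp: coeff_index_def)
    then have "dhom_poly \<Sigma> (A 0) (c 0) (J \<sigma>) (orbit_point \<sigma>)
        = (\<Sum>\<alpha>\<in>A 0. c 0 \<alpha> * of_nat (orbit_weight (rays \<Sigma>) \<sigma> (J \<sigma>) (hom_exp (A 0) \<alpha>)))"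
      using J \<open>\<sigma> \<in> \<Sigma>\<close> by (intro dhom_poly_at_orbit_point[OF fin(2)]) auto
    also have "\<dots> = (\<Sum>v\<in>coeff_index m A. case_prod c v * of_nat (w \<sigma> v))"
      by (subst sum_coeff_index_fst_zero[OF finite_coeff_index[OF finA]]) (simp_all add: w_def)
    also have "\<dots> \<noteq> 0" using c \<open>\<sigma> \<in> \<Sigma>\<close> by blast
    finally show "dhom_poly \<Sigma> (A 0) (c 0) (J \<sigma>) (orbit_point \<sigma>) \<noteq> 0" .
  qed
qed

theorem mainTheorem16:
  fixes m :: nat
    and A :: "nat \<Rightarrow> (int^'n) set"
    and \<Sigma> :: "(real^'n) set set"
  assumes "admissible m A"
    and "appropriate_fan m A \<Sigma>"
  shows "generic m A (\<lambda>c. \<forall>\<sigma>\<in>\<Sigma>. \<exists>x\<in>orbit_cox \<Sigma> \<sigma>. \<exists>j. dhom_poly \<Sigma> (A 0) (c 0) j x \<noteq> 0)"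
proof -
  note A0 = admissible_support_zero[OF assms(1)]
  obtain j0 where j0: "unitvec j0 \<in> A 0" using A0(5) ..
  have fan: "is_fan \<Sigma>" "orthant \<in> \<Sigma>" "refines \<Sigma> (normal_fan (conv_pts (A 0)))"
    using assms(2) unfolding appropriate_fan_def by blast+
  then have fin: "finite \<Sigma>" "finite (rays \<Sigma>)" using finite_rays unfolding is_fan_def by blast+
  have "\<forall>\<sigma>\<in>\<Sigma>. \<exists>j. unitvec j \<in> rays \<Sigma>
      \<and> (\<exists>\<alpha>\<in>A 0. 0 < orbit_weight (rays \<Sigma>) \<sigma> j (hom_exp (A 0) \<alpha>))"
    using exists_positive_orbit_weight[OF A0(1-4) j0 fan] unitvec_in_rays[OF fan(1,2)] by blast
  then obtain J where "\<forall>\<sigma>\<in>\<Sigma>. unitvec (J \<sigma>) \<in> rays \<Sigma>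
      \<and> (\<exists>\<alpha>\<in>A 0. 0 < orbit_weight (rays \<Sigma>) \<sigma> (J \<sigma>) (hom_exp (A 0) \<alpha>))"
    by (rule bchoice[elim_format]) blast
  moreover have "\<forall>i\<le>m. finite (A i)" using assms(1) unfolding admissible_def by blast
  ultimately have "generic m A (\<lambda>c. \<forall>\<sigma>\<in>\<Sigma>. dhom_poly \<Sigma> (A 0) (c 0) (J \<sigma>) (orbit_point \<sigma>) \<noteq> 0)"
    using fin by (intro generic_orbit_derivative_nonzero)
  then show ?thesis by (rule generic_mono) (use orbit_point_in_orbit_cox in blast)
qed

end
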